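(* For every round $\ell\ge\lceil n/2\rceil$ of Algorithm 2 in which a tentative edge $e^{(\ell)}$ exists, the probability that $e^{(\ell)}$ is feasible, i.e. that the set of edges accepted before round $\ell$ together with $e^{(\ell)}$ is a matching, conditioned on $L^{\le\ell}$ and on $T^{\ge\ell+1}$, is at least $\frac{n/2-1}{\ell-1}$.
   Context: Submodular secretary matching setting. Let $G=(L\cup R,E)$ be a bipartite graph with $|L|=n$, and $v\colon 2^E\to\mathbb{R}_{\ge0}$ monotone and submodular. The vertices of $L$ arrive one per round in uniformly random order; on arrival of $u\in L$ its incident edges are revealed; $L^{\le\ell}$ denotes the set of vertices of $L$ arriving in rounds $1,\dots,\ell$. $\mathcal{A}$ is an offline algorithm that for every $L'\subseteq L$ returns a matching $\mathcal{A}(L'\cup R)$ of the subgraph induced by $L'\cup R$, depending only on the set $L'$. Algorithm 2: it rejects the vertices arriving in rounds $1,\dots,\lceil n/2\rceil-1$; in each round $\ell\ge\lceil n/2\rceil$ with arriving vertex $u$, it computes $M^{(\ell)}=\mathcal{A}(L^{\le\ell}\cup R)$, lets $e^{(\ell)}$ be the edge incident to $u$ in $M^{(\ell)}$ (the tentative edge; none if $u$ is unmatched), and if $e^{(\ell)}$ exists and the set of accepted edges together with $e^{(\ell)}$ is a matching, accepts $e^{(\ell)}$. $T^{\ge\ell}$ is the set of tentative edges of rounds $\ell,\dots,n$. *)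

theory Defs
  imports "HOL-Probability.Probability" "HOL-Combinatorics.Multiset_Permutations"
begin

definition is_matching :: "('l \<times> 'r) set \<Rightarrow> bool" where
  "is_matching M \<longleftrightarrow>
     (\<forall>e\<in>M. \<forall>e'\<in>M. e \<noteq> e' \<longrightarrow> fst e \<noteq> fst e' \<and> snd e \<noteq> snd e')"

text \<open>An arrival order is a list sigma enumerating L without repetition; the vertex arriving
  in round k (1-based) is sigma ! (k - 1), and L^{<= l} is set (take l sigma).\<close>
definition arrived :: "'l list \<Rightarrow> nat \<Rightarrow> 'l set" where
  "arrived \<sigma> l = set (take l \<sigma>)"

text \<open>Tentative edge of round l: the edge incident to the arriving vertex in A(L^{<= l} \<union> R).\<close>
definition tentative :: "('l set \<Rightarrow> ('l \<times> 'r) set) \<Rightarrow> 'l list \<Rightarrow> nat \<Rightarrow> ('l \<times> 'r) option" where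
  "tentative A \<sigma> l =
     (let u = \<sigma> ! (l - 1); M = A (arrived \<sigma> l) in
      if \<exists>r. (u, r) \<in> M then Some (u, THE r. (u, r) \<in> M) else None)"

definition start_round :: "nat \<Rightarrow> nat" where
  "start_round n = nat \<lceil>real n / 2\<rceil>"

fun accepted :: "('l set \<Rightarrow> ('l \<times> 'r) set) \<Rightarrow> 'l list \<Rightarrow> nat \<Rightarrow> ('l \<times> 'r) set" where
  "accepted A \<sigma> 0 = {}"
| "accepted A \<sigma> (Suc k) =
     (if Suc k < start_round (length \<sigma>) then accepted A \<sigma> k
      else (case tentative A \<sigma> (Suc k) of
              None \<Rightarrow> accepted A \<sigma> k
            | Some e \<Rightarrow> if is_matching (insert e (accepted A \<sigma> k))
                        then insert e (accepted A \<sigma> k) else accepted A \<sigma> k))"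

definition tentative_from :: "('l set \<Rightarrow> ('l \<times> 'r) set) \<Rightarrow> 'l list \<Rightarrow> nat \<Rightarrow> ('l \<times> 'r) set" where
  "tentative_from A \<sigma> l = {e. \<exists>k. l \<le> k \<and> k \<le> length \<sigma> \<and> tentative A \<sigma> k = Some e}"

definition feasible :: "('l set \<Rightarrow> ('l \<times> 'r) set) \<Rightarrow> 'l list \<Rightarrow> nat \<Rightarrow> bool" where
  "feasible A \<sigma> l \<longleftrightarrow>
     (\<exists>e. tentative A \<sigma> l = Some e \<and> is_matching (insert e (accepted A \<sigma> (l - 1))))"

end

(* Conditioning on L^{<=l} = S and on T^{>=l+1} splits a uniformly random arrival order into a
   uniformly random order p of S and an independent order of L - S: the tentative edge of round l and
   its feasibility depend only on p, the set T^{>=l+1} only on the second part. So the conditional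
   probability is a ratio of numbers of orders of S.
   If the last vertex u of p is matched to r in A(S), the edge (u, r) is feasible as soon as for every
   round k with ceil(n/2) <= k < l the k-th vertex is not the partner of r in A(L^{<=k}). This partner
   is unique and the k-th vertex is uniformly distributed in L^{<=k}, so round k fails with probability
   at most 1/k, and the product of the 1 - 1/k telescopes to (ceil(n/2) - 1)/(l - 1). *)

theory Submission
  imports Defs
begin

text \<open>Entry k arrives in round Suc k. B Y will be the partner in A Y of a fixed right vertex.\<close>
definition avoiding_permutations :: "nat \<Rightarrow> ('a set \<Rightarrow> 'a set) \<Rightarrow> 'a set \<Rightarrow> 'a list set" where
  "avoiding_permutations s B X =
     {p \<in> permutations_of_set X. \<forall>k < length p. s \<le> Suc k \<longrightarrow> p ! k \<notin> B (set (take (Suc k) p))}"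

lemma finite_avoiding_permutations [simp]: "finite (avoiding_permutations s B X)"
  unfolding avoiding_permutations_def by (rule finite_subset[of _ "permutations_of_set X"]) auto

lemma snoc_in_permutations_of_set:
  assumes "p \<in> permutations_of_set (X - {x})" "x \<in> X"
  shows "p @ [x] \<in> permutations_of_set X"
  using assms by (auto simp: permutations_of_set_def)

lemma snoc_in_avoiding_permutations:
  assumes p: "p \<in> avoiding_permutations s B (X - {x})" and x: "x \<in> X - B X"
  shows "p @ [x] \<in> avoiding_permutations s B X"
proof -
  have p_perm: "p \<in> permutations_of_set (X - {x})"
    using p by (simp add: avoiding_permutations_def)
  then have px_perm: "p @ [x] \<in> permutations_of_set X"
    using x by (simp add: snoc_in_permutations_of_set)
  have "(p @ [x]) ! k \<notin> B (set (take (Suc k) (p @ [x])))"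
    if "k < length (p @ [x])" "s \<le> Suc k" for k
  proof (cases "k < length p")
    case True
    then show ?thesis
      using p that by (auto simp: avoiding_permutations_def nth_append)
  next
    case False
    then have "k = length p" using that by simp
    then show ?thesis
      using x px_perm by (auto simp: permutations_of_set_def)
  qed
  with px_perm show ?thesis by (simp add: avoiding_permutations_def)
qed

text \<open>Induction on the last entry, which must avoid B X: with m = card X, at least m - 1 candidates
  remain, and (m - 1) (m - 2)! = (m - 1)!. In probabilistic terms, round k succeeds with probability
  at least 1 - 1/k and the product over s \<le> k \<le> m telescopes to (s - 1)/m.\<close>
lemma card_avoiding_permutations_ge:
  assumes "finite X" and "\<And>Y a b. Y \<subseteq> X \<Longrightarrow> a \<in> B Y \<Longrightarrow> b \<in> B Y \<Longrightarrow> a = b"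
    and "s \<le> card X + 1"
  shows "(s - 1) * fact (card X - 1) \<le> card (avoiding_permutations s B X)"
  using assms
proof (induction "card X" arbitrary: X)
  case 0
  then show ?case by simp
next
  case (Suc m X)
  show ?case
  proof (cases "s \<le> Suc m")
    case False
    then have "s = Suc m + 1" using Suc by simp
    then have "avoiding_permutations s B X = permutations_of_set X"
      using Suc.hyps by (auto simp: avoiding_permutations_def length_finite_permutations_of_set)
    then show ?thesis using \<open>s = Suc m + 1\<close> Suc.hyps(2)[symmetric] Suc.prems(1) by simp
  next
    case True
    define D where "D = X - B X"
    have "card (X \<inter> B X) \<le> Suc 0"
      using Suc.prems by (subst card_le_Suc0_iff_eq) auto
    then have card_D: "m \<le> card D"
      unfolding D_def using Suc.hyps Suc.prems(1) by (simp add: card_Diff_subset_Int)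
    have IH: "(s - 1) * fact (m - 1) \<le> card (avoiding_permutations s B (X - {x}))" if "x \<in> D" for x
    proof -
      have "m = card (X - {x})" using that Suc.hyps(2) Suc.prems(1) by (simp add: D_def)
      moreover have "\<And>Y a b. Y \<subseteq> X - {x} \<Longrightarrow> a \<in> B Y \<Longrightarrow> b \<in> B Y \<Longrightarrow> a = b"
        using Suc.prems(2) by blast
      ultimately show ?thesis
        using Suc.hyps(1)[of "X - {x}"] True Suc.prems(1) by simp
    qed
    have "card D * ((s - 1) * fact (m - 1))
        \<le> (\<Sum>x\<in>D. card (avoiding_permutations s B (X - {x})))"
      using IH sum_mono[of D "\<lambda>_. (s - 1) * fact (m - 1)"] by simp
    also have "\<dots> = card (\<Union>x\<in>D. (\<lambda>p. p @ [x]) ` avoiding_permutations s B (X - {x}))"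
      using Suc.prems(1) by (subst card_UN_disjoint) (auto simp: D_def card_image inj_on_def)
    also have "\<dots> \<le> card (avoiding_permutations s B X)"
      by (rule card_mono) (auto simp: D_def intro: snoc_in_avoiding_permutations)
    finally have bound: "card D * ((s - 1) * fact (m - 1)) \<le> card (avoiding_permutations s B X)" .
    show ?thesis
    proof (cases "m = 0")
      case True
      then show ?thesis using \<open>s \<le> Suc m\<close> by simp
    next
      case False
      have "card X - 1 = Suc (m - 1)" using False Suc.hyps(2) by simp
      then have "(s - 1) * fact (card X - 1) = m * ((s - 1) * fact (m - 1))"
        using False by (simp only: fact_Suc) simp
      also have "\<dots> \<le> card D * ((s - 1) * fact (m - 1))"
        using card_D by simp
      finally show ?thesis using bound by linarith
    qed
  qed
qed

lemma is_matching_insertI: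
  assumes "is_matching M" "\<forall>e\<in>M. fst e \<noteq> fst x \<and> snd e \<noteq> snd x"
  shows "is_matching (insert x M)"
  using assms unfolding is_matching_def by (metis insert_iff)

lemma is_matching_fst_eq:
  assumes "is_matching M" "(u, r) \<in> M" "(u, r') \<in> M"
  shows "r = r'"
  using assms unfolding is_matching_def by fastforce

lemma is_matching_snd_eq:
  assumes "is_matching M" "(u, r) \<in> M" "(u', r) \<in> M"
  shows "u = u'"
  using assms unfolding is_matching_def by fastforce

lemma tentative_neq_None_iff:
  "tentative A \<sigma> j \<noteq> None \<longleftrightarrow> (\<exists>r. (\<sigma> ! (j - 1), r) \<in> A (arrived \<sigma> j))"
  by (simp add: tentative_def Let_def)

lemma feasible_tentative_neq_None: "feasible A \<sigma> l \<Longrightarrow> tentative A \<sigma> l \<noteq> None"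
  by (auto simp: feasible_def)

lemma tentative_eq_SomeI:
  assumes "is_matching (A (arrived \<sigma> j))" "(\<sigma> ! (j - 1), r) \<in> A (arrived \<sigma> j)"
  shows "tentative A \<sigma> j = Some (\<sigma> ! (j - 1), r)"
  using assms is_matching_fst_eq[OF assms(1)]
  by (auto simp: tentative_def Let_def intro: the_equality)

lemma tentative_eq_SomeD:
  assumes "tentative A \<sigma> j = Some e" "is_matching (A (arrived \<sigma> j))"
  shows "e \<in> A (arrived \<sigma> j)" "fst e = \<sigma> ! (j - 1)"
proof -
  obtain r where r: "(\<sigma> ! (j - 1), r) \<in> A (arrived \<sigma> j)"
    using assms(1) by (auto simp: tentative_def Let_def split: if_splits)
  then have "tentative A \<sigma> j = Some (\<sigma> ! (j - 1), r)"
    using assms(2) by (rule tentative_eq_SomeI[rotated])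
  with assms(1) r show "e \<in> A (arrived \<sigma> j)" "fst e = \<sigma> ! (j - 1)"
    by auto
qed

lemma tentative_cong_take:
  assumes "take j \<sigma> = take j \<sigma>'" "1 \<le> j" "j \<le> length \<sigma>"
  shows "tentative A \<sigma> j = tentative A \<sigma>' j"
proof -
  have "\<sigma> ! (j - 1) = take j \<sigma> ! (j - 1)" using assms(2) by simp
  also have "\<dots> = \<sigma>' ! (j - 1)" using assms(1,2) by simp
  finally have "\<sigma> ! (j - 1) = \<sigma>' ! (j - 1)" .
  then show ?thesis using assms(1) by (simp add: tentative_def arrived_def)
qed

lemma accepted_cong_take:
  assumes "take k \<sigma> = take k \<sigma>'" "k \<le> length \<sigma>" "length \<sigma> = length \<sigma>'"
  shows "accepted A \<sigma> k = accepted A \<sigma>' k"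
  using assms
proof (induction k)
  case (Suc k)
  have "take k \<sigma> = take k \<sigma>'"
    using arg_cong[OF Suc.prems(1), of "take k"] by simp
  then have "accepted A \<sigma> k = accepted A \<sigma>' k" using Suc by simp
  moreover have "tentative A \<sigma> (Suc k) = tentative A \<sigma>' (Suc k)"
    using Suc.prems by (intro tentative_cong_take) auto
  ultimately show ?case using Suc.prems(3) by (simp only: accepted.simps)
qed simp

lemma feasible_cong_take:
  assumes "take l \<sigma> = take l \<sigma>'" "1 \<le> l" "l \<le> length \<sigma>" "length \<sigma> = length \<sigma>'"
  shows "feasible A \<sigma> l \<longleftrightarrow> feasible A \<sigma>' l"
proof -
  have "take (l - 1) \<sigma> = take (l - 1) \<sigma>'"
    using assms(1) by (metis diff_le_self min_absorb1 take_take)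
  then show ?thesis
    using assms tentative_cong_take[OF assms(1-3), of A] accepted_cong_take[of "l - 1" \<sigma> \<sigma>' A]
    by (simp add: feasible_def)
qed

lemma tentative_append_cong:
  assumes "length p = length p'" "set p = set p'" "length p < j"
  shows "tentative A (p @ q) j = tentative A (p' @ q) j"
proof -
  have "\<not> j - 1 < length p" using assms(3) by simp
  then have "(p @ q) ! (j - 1) = (p' @ q) ! (j - 1)" using assms(1) by (simp add: nth_append)
  moreover have "arrived (p @ q) j = arrived (p' @ q) j" using assms by (simp add: arrived_def)
  ultimately show ?thesis by (simp add: tentative_def)
qed

lemma tentative_from_append_cong:
  assumes "length p = length p'" "set p = set p'"
  shows "tentative_from A (p @ q) (length p + 1) = tentative_from A (p' @ q) (length p + 1)"
  using tentative_append_cong[OF assms, of _ A q] assms(1)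
  unfolding tentative_from_def by (metis Suc_eq_plus1 Suc_le_eq length_append)

lemma is_matching_accepted: "is_matching (accepted A \<sigma> k)"
  by (induction k) (auto simp: is_matching_def split: option.split)

lemma accepted_tentative:
  assumes "e \<in> accepted A \<sigma> k"
  shows "\<exists>j. start_round (length \<sigma>) \<le> j \<and> 1 \<le> j \<and> j \<le> k \<and> tentative A \<sigma> j = Some e"
  using assms
proof (induction k)
  case (Suc k)
  show ?case
  proof (cases "e \<in> accepted A \<sigma> k")
    case True
    then show ?thesis using Suc.IH le_SucI by blast
  next
    case False
    then have "\<not> Suc k < start_round (length \<sigma>) \<and> tentative A \<sigma> (Suc k) = Some e"
      using Suc.prems by (auto split: if_splits option.splits)
    then show ?thesis by (intro exI[of _ "Suc k"]) simp
  qed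
qed simp

lemma feasible_snoc_avoiding:
  assumes match: "\<And>Y. Y \<subseteq> S \<Longrightarrow> is_matching (A Y)"
    and u: "u \<in> S" "(u, r) \<in> A S" and l: "l = Suc (length p)"
    and p: "p \<in> avoiding_permutations (start_round (l + length q)) (\<lambda>Y. {v. (v, r) \<in> A Y}) (S - {u})"
  shows "feasible A (p @ u # q) l"
proof -
  define \<sigma> where "\<sigma> = p @ u # q"
  have p_perm: "p \<in> permutations_of_set (S - {u})"
    using p by (simp add: avoiding_permutations_def)
  then have set_p: "set p = S - {u}"
    by (simp add: permutations_of_set_def)
  have arrived_j: "arrived \<sigma> j = set (take j p)" if "j \<le> length p" for j
    using that by (simp add: \<sigma>_def arrived_def)
  have "arrived \<sigma> l = S" using set_p u by (auto simp: \<sigma>_def l arrived_def)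
  moreover have "\<sigma> ! (l - 1) = u" by (simp add: \<sigma>_def l)
  ultimately have tent: "tentative A \<sigma> l = Some (u, r)"
    using tentative_eq_SomeI[of A \<sigma> l r] match u by simp
  have "fst e \<noteq> u \<and> snd e \<noteq> r" if e_acc: "e \<in> accepted A \<sigma> (l - 1)" for e
  proof -
    obtain i where i: "start_round (length \<sigma>) \<le> Suc i" "i < length p"
      and tent_i: "tentative A \<sigma> (Suc i) = Some e"
      using accepted_tentative[OF e_acc] by (force simp: l dest: Suc_le_D)
    have arrived_i: "arrived \<sigma> (Suc i) = set (take (Suc i) p)"
      using arrived_j i(2) by simp
    have "set (take (Suc i) p) \<subseteq> S" using set_p set_take_subset[of "Suc i" p] by blast
    then have "e \<in> A (set (take (Suc i) p))" "fst e = p ! i"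
      using tentative_eq_SomeD[OF tent_i] match arrived_i i(2) by (auto simp: \<sigma>_def nth_append)
    moreover have "p ! i \<in> S - {u}" using set_p i(2) nth_mem by blast
    moreover have "(p ! i, r) \<notin> A (set (take (Suc i) p))"
      using p i by (simp add: avoiding_permutations_def \<sigma>_def l)
    ultimately show ?thesis by (metis DiffD2 insertI1 prod.collapse)
  qed
  then have "is_matching (insert (u, r) (accepted A \<sigma> (l - 1)))"
    by (auto intro: is_matching_insertI is_matching_accepted)
  then show ?thesis using tent by (simp add: feasible_def \<sigma>_def)
qed

lemma butlast_in_permutations_of_set:
  assumes "p \<in> permutations_of_set S" "p \<noteq> []"
  shows "butlast p \<in> permutations_of_set (S - {last p})"
proof -
  have "distinct (butlast p @ [last p])" "set (butlast p @ [last p]) = S"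
    using assms by (simp_all add: permutations_of_set_def)
  then show ?thesis by (auto simp: permutations_of_set_def)
qed

lemma card_tentative_prefixes_le:
  assumes "finite S" "S \<noteq> {}"
  shows "card {p \<in> permutations_of_set S. tentative A (p @ q) (card S) \<noteq> None}
           \<le> card {u \<in> S. \<exists>r. (u, r) \<in> A S} * fact (card S - 1)"
proof -
  define U where "U = {u \<in> S. \<exists>r. (u, r) \<in> A S}"
  have "finite U" using assms(1) by (simp add: U_def)
  have "{p \<in> permutations_of_set S. tentative A (p @ q) (card S) \<noteq> None}
          \<subseteq> (\<Union>u\<in>U. (\<lambda>p. p @ [u]) ` permutations_of_set (S - {u}))"
  proof
    fix p assume "p \<in> {p \<in> permutations_of_set S. tentative A (p @ q) (card S) \<noteq> None}"
    then have p: "p \<in> permutations_of_set S" and tent: "tentative A (p @ q) (card S) \<noteq> None"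
      by simp_all
    have len_p: "length p = card S" using p assms(1) by (simp add: length_finite_permutations_of_set)
    then have "p \<noteq> []" and last_idx: "card S - 1 < length p"
      using assms by (auto simp: card_gt_0_iff)
    have "(p @ q) ! (card S - 1) = last p" "arrived (p @ q) (card S) = S"
      using p len_p last_idx \<open>p \<noteq> []\<close> by (simp_all add: nth_append last_conv_nth arrived_def permutations_of_set_def)
    with tent have "\<exists>r. (last p, r) \<in> A S"
      unfolding tentative_neq_None_iff by metis
    moreover have "last p \<in> S"
      using p \<open>p \<noteq> []\<close> by (auto simp: permutations_of_set_def)
    ultimately have "last p \<in> U" by (simp add: U_def)
    moreover have "p = butlast p @ [last p]" using \<open>p \<noteq> []\<close> by simp
    ultimately show "p \<in> (\<Union>u\<in>U. (\<lambda>p. p @ [u]) ` permutations_of_set (S - {u}))"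
      using butlast_in_permutations_of_set[OF p \<open>p \<noteq> []\<close>] by blast
  qed
  then have "card {p \<in> permutations_of_set S. tentative A (p @ q) (card S) \<noteq> None}
               \<le> card (\<Union>u\<in>U. (\<lambda>p. p @ [u]) ` permutations_of_set (S - {u}))"
    by (rule card_mono[rotated]) (simp add: \<open>finite U\<close>)
  also have "\<dots> \<le> (\<Sum>u\<in>U. card ((\<lambda>p. p @ [u]) ` permutations_of_set (S - {u})))"
    by (rule card_UN_le[OF \<open>finite U\<close>])
  also have "\<dots> \<le> (\<Sum>u\<in>U. fact (card S - 1))"
  proof (rule sum_mono)
    fix u assume "u \<in> U"
    then have "card (permutations_of_set (S - {u})) = fact (card S - 1)"
      using assms(1) by (simp add: U_def)
    then show "card ((\<lambda>p. p @ [u]) ` permutations_of_set (S - {u})) \<le> fact (card S - 1)"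
      by (metis card_image_le finite_permutations_of_set)
  qed
  finally show ?thesis by (simp add: U_def)
qed

lemma card_feasible_prefixes_ge_matched:
  assumes "finite S" and match: "\<And>Y. Y \<subseteq> S \<Longrightarrow> is_matching (A Y)"
    and s_le: "start_round (card S + length q) \<le> card S"
  shows "card {u \<in> S. \<exists>r. (u, r) \<in> A S} * ((start_round (card S + length q) - 1) * fact (card S - 2))
           \<le> card {p \<in> permutations_of_set S. feasible A (p @ q) (card S)}"
proof -
  define s where "s = start_round (card S + length q)"
  define U where "U = {u \<in> S. \<exists>r. (u, r) \<in> A S}"
  define PF where "PF = {p \<in> permutations_of_set S. feasible A (p @ q) (card S)}"
  obtain r where r: "\<And>u. u \<in> U \<Longrightarrow> (u, r u) \<in> A S"
    using bchoice[of U "\<lambda>u r. (u, r) \<in> A S"] by (auto simp: U_def)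
  define avoid where "avoid u = avoiding_permutations s (\<lambda>Y. {v. (v, r u) \<in> A Y}) (S - {u})" for u
  have "finite U" using assms(1) by (simp add: U_def)
  have "(s - 1) * fact (card S - 2) \<le> card (avoid u)" if "u \<in> U" for u
  proof -
    have card_Su: "card (S - {u}) = card S - 1" using that assms(1) by (simp add: U_def)
    have "a = b" if "Y \<subseteq> S - {u}" "a \<in> {v. (v, r u) \<in> A Y}" "b \<in> {v. (v, r u) \<in> A Y}" for Y a b
      using that match[of Y] is_matching_snd_eq[of "A Y" a "r u" b] by auto
    then have "(s - 1) * fact (card (S - {u}) - 1) \<le> card (avoid u)"
      unfolding avoid_def using assms(1) s_le card_Su
      by (intro card_avoiding_permutations_ge) (auto simp: s_def)
    then show ?thesis using card_Su by (simp add: numeral_2_eq_2)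
  qed
  then have "card U * ((s - 1) * fact (card S - 2)) \<le> (\<Sum>u\<in>U. card (avoid u))"
    using sum_mono[of U "\<lambda>_. (s - 1) * fact (card S - 2)"] by simp
  also have "\<dots> = card (\<Union>u\<in>U. (\<lambda>p. p @ [u]) ` avoid u)"
    using \<open>finite U\<close> by (subst card_UN_disjoint) (auto simp: avoid_def card_image inj_on_def)
  also have "\<dots> \<le> card PF"
  proof (rule card_mono)
    show "finite PF" by (simp add: PF_def)
    show "(\<Union>u\<in>U. (\<lambda>p. p @ [u]) ` avoid u) \<subseteq> PF"
    proof clarify
      fix u p assume "u \<in> U" "p \<in> avoid u"
      then have u: "u \<in> S" and p_perm: "p \<in> permutations_of_set (S - {u})"
        by (simp_all add: U_def avoid_def avoiding_permutations_def)
      moreover have "card S > 0" using u assms(1) card_gt_0_iff by blast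
      ultimately have len_p: "Suc (length p) = card S"
        using assms(1) by (simp add: length_finite_permutations_of_set)
      then have "feasible A (p @ u # q) (card S)"
        using feasible_snoc_avoiding[of S A u "r u", OF match u r[OF \<open>u \<in> U\<close>] len_p[symmetric]] \<open>p \<in> avoid u\<close>
        by (simp add: avoid_def s_def)
      then show "p @ [u] \<in> PF"
        using snoc_in_permutations_of_set[OF p_perm u] by (simp add: PF_def)
    qed
  qed
  finally show ?thesis by (simp add: s_def U_def PF_def)
qed

lemma card_feasible_prefixes_ge:
  assumes "finite S" and "\<And>Y. Y \<subseteq> S \<Longrightarrow> is_matching (A Y)"
    and s_le: "start_round (card S + length q) \<le> card S"
  shows "(start_round (card S + length q) - 1)
           * card {p \<in> permutations_of_set S. tentative A (p @ q) (card S) \<noteq> None}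
         \<le> (card S - 1) * card {p \<in> permutations_of_set S. feasible A (p @ q) (card S)}"
proof (cases "card S \<le> 1")
  case True
  then have "start_round (card S + length q) - 1 = 0" using s_le by simp
  then show ?thesis by simp
next
  case False
  define s l u where "s = start_round (card S + length q)" and "l = card S"
    and "u = card {u \<in> S. \<exists>r. (u, r) \<in> A S}"
  have "2 \<le> l" using False by (simp add: l_def)
  then obtain k where "l = 2 + k" using le_Suc_ex by blast
  then have fact_l: "fact (l - 1) = (l - 1) * fact (l - 2)"
    by (simp add: numeral_2_eq_2)
  have "S \<noteq> {}" using False by auto
  have "(s - 1) * card {p \<in> permutations_of_set S. tentative A (p @ q) l \<noteq> None}
          \<le> (s - 1) * (u * fact (l - 1))"
    using card_tentative_prefixes_le[OF assms(1) \<open>S \<noteq> {}\<close>, of A q] unfolding u_def l_def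
    by (rule mult_left_mono) simp
  also have "\<dots> = (l - 1) * (u * ((s - 1) * fact (l - 2)))"
    unfolding fact_l by (simp only: mult_ac)
  also have "\<dots> \<le> (l - 1) * card {p \<in> permutations_of_set S. feasible A (p @ q) l}"
    using card_feasible_prefixes_ge_matched[of S A q, OF assms] by (simp add: s_def l_def u_def)
  finally show ?thesis by (simp add: s_def l_def)
qed

lemma card_permutations_of_set_prefix_split:
  assumes "finite L" "S \<subseteq> L" "card S = l"
  shows "card {\<sigma> \<in> permutations_of_set L. set (take l \<sigma>) = S \<and> P (take l \<sigma>) \<and> Q (drop l \<sigma>)}
           = card {p \<in> permutations_of_set S. P p} * card {q \<in> permutations_of_set (L - S). Q q}"
proof -
  have "finite S" using assms finite_subset by blast
  define PS where "PS = {p \<in> permutations_of_set S. P p}"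
  define QS where "QS = {q \<in> permutations_of_set (L - S). Q q}"
  have len_p: "length p = l" if "p \<in> PS" for p
    using that \<open>finite S\<close> assms(3) by (auto simp: PS_def length_finite_permutations_of_set)
  have "{\<sigma> \<in> permutations_of_set L. set (take l \<sigma>) = S \<and> P (take l \<sigma>) \<and> Q (drop l \<sigma>)}
          = (\<lambda>(p, q). p @ q) ` (PS \<times> QS)"
  proof (intro equalityI subsetI)
    fix \<sigma> assume "\<sigma> \<in> {\<sigma> \<in> permutations_of_set L. set (take l \<sigma>) = S \<and> P (take l \<sigma>) \<and> Q (drop l \<sigma>)}"
    then have \<sigma>: "distinct (take l \<sigma> @ drop l \<sigma>)" "set (take l \<sigma> @ drop l \<sigma>) = L"
      "set (take l \<sigma>) = S" "P (take l \<sigma>)" "Q (drop l \<sigma>)"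
      by (simp_all add: permutations_of_set_def)
    then have "take l \<sigma> \<in> PS" "drop l \<sigma> \<in> QS"
      unfolding PS_def QS_def permutations_of_set_def distinct_append set_append by auto
    then show "\<sigma> \<in> (\<lambda>(p, q). p @ q) ` (PS \<times> QS)"
      by (auto intro!: image_eqI[of _ _ "(take l \<sigma>, drop l \<sigma>)"])
  next
    fix \<sigma> assume "\<sigma> \<in> (\<lambda>(p, q). p @ q) ` (PS \<times> QS)"
    then obtain p q where "\<sigma> = p @ q" "p \<in> PS" "q \<in> QS" by auto
    then show "\<sigma> \<in> {\<sigma> \<in> permutations_of_set L. set (take l \<sigma>) = S \<and> P (take l \<sigma>) \<and> Q (drop l \<sigma>)}"
      using len_p assms(2) by (auto simp: PS_def QS_def permutations_of_set_def)
  qed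
  moreover have "inj_on (\<lambda>(p, q). p @ q) (PS \<times> QS)"
    using len_p by (auto simp: inj_on_def)
  ultimately show ?thesis
    by (simp add: card_image card_cartesian_product PS_def QS_def)
qed

lemma start_round_ge_half: "real n / 2 \<le> real (start_round n)"
  unfolding start_round_def by linarith

lemma tentative_take_append:
  assumes "1 \<le> l" "l \<le> length \<sigma>"
  shows "tentative A (take l \<sigma> @ q) l = tentative A \<sigma> l"
  using assms by (intro tentative_cong_take) auto

lemma feasible_take_append:
  assumes "1 \<le> l" "length \<sigma> = l + length q"
  shows "feasible A (take l \<sigma> @ q) l \<longleftrightarrow> feasible A \<sigma> l"
  using assms by (intro feasible_cong_take) auto

lemma arrived_permutation:
  assumes "\<sigma> \<in> permutations_of_set L" "l \<le> card L" "finite L"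
  shows "arrived \<sigma> l \<subseteq> L" "card (arrived \<sigma> l) = l"
proof -
  have "distinct \<sigma>" "set \<sigma> = L" "length \<sigma> = card L"
    using assms by (auto simp: permutations_of_set_def length_finite_permutations_of_set)
  then show "arrived \<sigma> l \<subseteq> L" "card (arrived \<sigma> l) = l"
    using assms(2) set_take_subset[of l \<sigma>] by (auto simp: arrived_def distinct_card)
qed

lemma card_permutations_round_event:
  assumes "finite L" "S \<subseteq> L" "card S = l"
    and p\<^sub>0: "length p\<^sub>0 = l" "set p\<^sub>0 = S" and q\<^sub>0: "l + length q\<^sub>0 = card L"
    and R_local: "\<And>\<sigma>. length \<sigma> = l + length q\<^sub>0 \<Longrightarrow> R \<sigma> = R (take l \<sigma> @ q\<^sub>0)"
  shows "card {\<sigma> \<in> permutations_of_set L. arrived \<sigma> l = S \<and> tentative_from A \<sigma> (l + 1) = T \<and> R \<sigma>}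
           = card {p \<in> permutations_of_set S. R (p @ q\<^sub>0)}
             * card {q \<in> permutations_of_set (L - S). tentative_from A (p\<^sub>0 @ q) (l + 1) = T}"
proof -
  have "R \<sigma> = R (take l \<sigma> @ q\<^sub>0)
        \<and> tentative_from A \<sigma> (l + 1) = tentative_from A (p\<^sub>0 @ drop l \<sigma>) (l + 1)"
    if "\<sigma> \<in> permutations_of_set L" "set (take l \<sigma>) = S" for \<sigma>
  proof -
    have len: "length \<sigma> = l + length q\<^sub>0"
      using that(1) assms(1) q\<^sub>0 by (simp add: length_finite_permutations_of_set)
    from R_local[OF len] show ?thesis
      using tentative_from_append_cong[of "take l \<sigma>" p\<^sub>0 A "drop l \<sigma>"] len p\<^sub>0 that(2)
      by simp
  qed
  then have "{\<sigma> \<in> permutations_of_set L. arrived \<sigma> l = S \<and> tentative_from A \<sigma> (l + 1) = T \<and> R \<sigma>}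
      = {\<sigma> \<in> permutations_of_set L. set (take l \<sigma>) = S \<and> R (take l \<sigma> @ q\<^sub>0)
                                   \<and> tentative_from A (p\<^sub>0 @ drop l \<sigma>) (l + 1) = T}"
    by (auto simp: arrived_def)
  then show ?thesis
    using card_permutations_of_set_prefix_split[OF assms(1-3),
        of "\<lambda>p. R (p @ q\<^sub>0)" "\<lambda>q. tentative_from A (p\<^sub>0 @ q) (l + 1) = T"]
    by simp
qed

text \<open>The suffix of the given order only pads each order p of S to full length: acceptance
  depends on start_round of the length, and any suffix of that length would do.\<close>
lemma conditional_prob_feasible_eq:
  fixes L S :: "'l set" and A :: "'l set \<Rightarrow> ('l \<times> 'r) set" and T :: "('l \<times> 'r) set"
    and l :: nat and \<sigma>\<^sub>0 :: "'l list"
  defines "\<Omega> \<equiv> pmf_of_set (permutations_of_set L)"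
  defines "C \<equiv> {\<sigma>. arrived \<sigma> l = S \<and> tentative_from A \<sigma> (l + 1) = T \<and> tentative A \<sigma> l \<noteq> None}"
  defines "PC \<equiv> {p \<in> permutations_of_set S. tentative A (p @ drop l \<sigma>\<^sub>0) l \<noteq> None}"
  defines "PF \<equiv> {p \<in> permutations_of_set S. feasible A (p @ drop l \<sigma>\<^sub>0) l}"
  assumes "finite L" "1 \<le> l" "l \<le> card L" "\<sigma>\<^sub>0 \<in> permutations_of_set L" "\<sigma>\<^sub>0 \<in> C"
  shows "measure_pmf.prob \<Omega> ({\<sigma>. feasible A \<sigma> l} \<inter> C) / measure_pmf.prob \<Omega> C
           = real (card PF) / real (card PC)"
    and "PC \<noteq> {}"
proof -
  define P where "P = permutations_of_set L"
  define Q where "Q = {q \<in> permutations_of_set (L - S). tentative_from A (take l \<sigma>\<^sub>0 @ q) (l + 1) = T}"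
  have S: "S \<subseteq> L" "card S = l"
    using arrived_permutation[OF assms(8,7,5)] assms(9) by (auto simp: C_def)
  have p\<^sub>0: "length (take l \<sigma>\<^sub>0) = l" "set (take l \<sigma>\<^sub>0) = S"
    and q\<^sub>0: "l + length (drop l \<sigma>\<^sub>0) = card L"
    using assms(5,7-9) by (auto simp: C_def arrived_def length_finite_permutations_of_set)
  note split = card_permutations_round_event[OF assms(5) S p\<^sub>0 q\<^sub>0]
  have "P \<inter> C = {\<sigma> \<in> P. arrived \<sigma> l = S \<and> tentative_from A \<sigma> (l + 1) = T
                            \<and> tentative A \<sigma> l \<noteq> None}"
    by (auto simp: C_def)
  also have "card \<dots> = card PC * card Q"
    unfolding P_def PC_def Q_def
    by (rule split) (use assms(6) in \<open>simp add: tentative_take_append\<close>)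
  finally have card_C: "card (P \<inter> C) = card PC * card Q" .
  have "P \<inter> ({\<sigma>. feasible A \<sigma> l} \<inter> C)
          = {\<sigma> \<in> P. arrived \<sigma> l = S \<and> tentative_from A \<sigma> (l + 1) = T \<and> feasible A \<sigma> l}"
    by (auto simp: C_def dest: feasible_tentative_neq_None)
  also have "card \<dots> = card PF * card Q"
    unfolding P_def PF_def Q_def
    by (rule split) (use assms(6) in \<open>simp add: feasible_take_append\<close>)
  finally have card_FC: "card (P \<inter> ({\<sigma>. feasible A \<sigma> l} \<inter> C)) = card PF * card Q" .
  have "P \<noteq> {}" "finite P" using assms(5) by (simp_all add: P_def)
  moreover have "card (P \<inter> C) > 0"
    using assms(8,9) \<open>finite P\<close> by (auto simp: P_def card_gt_0_iff)
  ultimately show "PC \<noteq> {}" and "measure_pmf.prob \<Omega> ({\<sigma>. feasible A \<sigma> l} \<inter> C) / measure_pmf.prob \<Omega> C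
          = real (card PF) / real (card PC)"
    using card_C card_FC unfolding \<Omega>_def P_def[symmetric] by (auto simp: measure_pmf_of_set)
qed

lemma feasible_prefix_ratio_ge:
  assumes "finite S" "\<And>Y. Y \<subseteq> S \<Longrightarrow> is_matching (A Y)"
    and "start_round (card S + length q) \<le> card S" "S \<noteq> {}"
    and "{p \<in> permutations_of_set S. tentative A (p @ q) (card S) \<noteq> None} \<noteq> {}"
  shows "(real (card S + length q) / 2 - 1) / (real (card S) - 1)
           \<le> real (card {p \<in> permutations_of_set S. feasible A (p @ q) (card S)})
             / real (card {p \<in> permutations_of_set S. tentative A (p @ q) (card S) \<noteq> None})"
proof -
  define s l where "s = start_round (card S + length q)" and "l = card S"
  define c f where "c = card {p \<in> permutations_of_set S. tentative A (p @ q) (card S) \<noteq> None}"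
    and "f = card {p \<in> permutations_of_set S. feasible A (p @ q) (card S)}"
  have "c > 0" using assms(5) by (simp add: c_def card_gt_0_iff)
  have "l \<ge> 1" using assms(1,4) by (simp add: l_def Suc_le_eq card_gt_0_iff)
  have "(s - 1) * c \<le> (l - 1) * f"
    using card_feasible_prefixes_ge[OF assms(1-3)] by (simp add: s_def l_def c_def f_def)
  then have "real ((s - 1) * c) \<le> real ((l - 1) * f)"
    by (simp only: of_nat_le_iff)
  then have "real (s - 1) * c \<le> (real l - 1) * f"
    using \<open>l \<ge> 1\<close> by (simp add: of_nat_diff)
  then have "real (s - 1) / (real l - 1) \<le> real f / real c"
    using \<open>c > 0\<close> \<open>l \<ge> 1\<close> by (cases "l = 1") (simp_all add: pos_le_divide_eq mult.commute divide_le_eq)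
  moreover have "(real (card S + length q) / 2 - 1) / (real l - 1) \<le> real (s - 1) / (real l - 1)"
  proof (rule divide_right_mono)
    have "real s - 1 \<le> real (s - 1)" by (cases s) simp_all
    then show "real (card S + length q) / 2 - 1 \<le> real (s - 1)"
      using start_round_ge_half[of "card S + length q"] unfolding s_def by linarith
  qed (use \<open>l \<ge> 1\<close> in simp)
  ultimately show ?thesis by (simp add: l_def c_def f_def)
qed

theorem mainTheorem12:
  fixes L :: "'l set" and R :: "'r set" and E :: "('l \<times> 'r) set"
    and A :: "'l set \<Rightarrow> ('l \<times> 'r) set"
    and n l :: nat and S :: "'l set" and T :: "('l \<times> 'r) set"
  defines "\<Omega> \<equiv> pmf_of_set (permutations_of_set L)"
  defines "C \<equiv> {\<sigma>. arrived \<sigma> l = S \<and> tentative_from A \<sigma> (l + 1) = T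
                     \<and> tentative A \<sigma> l \<noteq> None}"
  assumes "finite L" and "card L = n" and "finite R" and "E \<subseteq> L \<times> R"
    and "\<And>L'. L' \<subseteq> L \<Longrightarrow> is_matching (A L') \<and> A L' \<subseteq> E \<inter> (L' \<times> R)"
    and "start_round n \<le> l" and "1 \<le> l" and "l \<le> n"
    and "measure_pmf.prob \<Omega> C > 0"
  shows "measure_pmf.prob \<Omega> ({\<sigma>. feasible A \<sigma> l} \<inter> C) / measure_pmf.prob \<Omega> C
           \<ge> (real n / 2 - 1) / (real l - 1)"
proof -
  have "permutations_of_set L \<inter> C \<noteq> {}"
    using assms(3,11) measure_pmf_zero_iff[of \<Omega> C] by (auto simp: \<Omega>_def)
  then obtain \<sigma>\<^sub>0 where \<sigma>\<^sub>0: "\<sigma>\<^sub>0 \<in> permutations_of_set L" "\<sigma>\<^sub>0 \<in> C" by blast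
  have "S \<subseteq> L" and card_S: "card S = l"
    using arrived_permutation[OF \<sigma>\<^sub>0(1)] \<sigma>\<^sub>0(2) assms(3,4,10) by (auto simp: C_def)
  then have "finite S" "S \<noteq> {}" and match: "\<And>Y. Y \<subseteq> S \<Longrightarrow> is_matching (A Y)"
    using assms(3,7,9) finite_subset by fastforce+
  have len: "l + length (drop l \<sigma>\<^sub>0) = n"
    using \<sigma>\<^sub>0(1) assms(3,4,10) card_S by (simp add: length_finite_permutations_of_set)
  have "l \<le> card L" using assms(4,10) by simp
  note cond = conditional_prob_feasible_eq[OF assms(3,9) this \<sigma>\<^sub>0(1) \<sigma>\<^sub>0(2)[unfolded C_def],
      folded \<Omega>_def C_def]
  show ?thesis
    using feasible_prefix_ratio_ge[of S A "drop l \<sigma>\<^sub>0", OF \<open>finite S\<close> match _ \<open>S \<noteq> {}\<close>,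
        unfolded card_S len] cond assms(8)
    by simp
qed

end
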